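(* Let $(B,\lfloor\cdot,\cdot\rfloor)$ be an SSD space with quadratic form $q$ and let $P\subset B$ be an affine $q$-positive set. Then $P$ is premaximally $q$-positive if and only if $P^{\pi}$ is an affine subset of $B$.
   Context: An SSD space is a pair $(B,\lfloor\cdot,\cdot\rfloor)$ with $B$ a nonzero real vector space and $\lfloor\cdot,\cdot\rfloor$ a symmetric bilinear form; $q(b)=\frac12\lfloor b,b\rfloor$. A nonempty $A\subset B$ is $q$-positive if $q(b-c)\ge0$ for all $b,c\in A$; maximally $q$-positive if $q$-positive and not properly contained in another $q$-positive set. $A^{\pi}:=\{b\in B: q(b-a)\ge0\ \forall a\in A\}$. $P$ is premaximally $q$-positive if there is a unique maximally $q$-positive set containing $P$. *)

theory Defs
  imports "HOL-Analysis.Analysis"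
begin

definition ssd_space :: "('a::real_vector \<Rightarrow> 'a \<Rightarrow> real) \<Rightarrow> bool" where
  "ssd_space bf \<longleftrightarrow> bilinear bf \<and> (\<forall>x y. bf x y = bf y x) \<and> (\<exists>b::'a. b \<noteq> 0)"

definition qform :: "('a::real_vector \<Rightarrow> 'a \<Rightarrow> real) \<Rightarrow> 'a \<Rightarrow> real" where
  "qform bf b = bf b b / 2"

definition q_positive :: "('a::real_vector \<Rightarrow> 'a \<Rightarrow> real) \<Rightarrow> 'a set \<Rightarrow> bool" where
  "q_positive bf A \<longleftrightarrow> A \<noteq> {} \<and> (\<forall>b\<in>A. \<forall>c\<in>A. qform bf (b - c) \<ge> 0)"

definition max_q_positive :: "('a::real_vector \<Rightarrow> 'a \<Rightarrow> real) \<Rightarrow> 'a set \<Rightarrow> bool" where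
  "max_q_positive bf A \<longleftrightarrow> q_positive bf A \<and> (\<forall>A'. q_positive bf A' \<and> A \<subseteq> A' \<longrightarrow> A' = A)"

definition pi_set :: "('a::real_vector \<Rightarrow> 'a \<Rightarrow> real) \<Rightarrow> 'a set \<Rightarrow> 'a set" where
  "pi_set bf A = {b. \<forall>a\<in>A. qform bf (b - a) \<ge> 0}"

definition premax_q_positive :: "('a::real_vector \<Rightarrow> 'a \<Rightarrow> real) \<Rightarrow> 'a set \<Rightarrow> bool" where
  "premax_q_positive bf P \<longleftrightarrow> (\<exists>!M. max_q_positive bf M \<and> P \<subseteq> M)"

end

theory Submission
  imports Defs
begin

text \<open>
  Every q-positive set lies in a maximal one (Zorn), and every q-positive superset of P lies
  in \<open>P\<^sup>\<pi>\<close>; hence P is premaximal exactly when \<open>P\<^sup>\<pi>\<close> is itself q-positive, and then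
  \<open>P\<^sup>\<pi>\<close> is the unique maximal extension. For affine P the set \<open>P\<^sup>\<pi>\<close> is invariant under
  translations by differences of points of P, point reflections through points of P and
  homotheties centred at points of P. If \<open>P\<^sup>\<pi>\<close> is q-positive and b, c \<in> \<open>P\<^sup>\<pi>\<close>, p \<in> P,
  then 2p - c + a - p \<in> \<open>P\<^sup>\<pi>\<close> for every a \<in> P, so q(b + c - p - a) \<ge> 0, i.e.
  b + c - p \<in> \<open>P\<^sup>\<pi>\<close>; together with the homotheties this makes \<open>P\<^sup>\<pi>\<close> affine.
  Conversely, if \<open>P\<^sup>\<pi>\<close> is affine, then b + p - c \<in> \<open>P\<^sup>\<pi>\<close>, whence q(b - c) = q((b + p - c) - p) \<ge> 0.
\<close>

lemma qform_uminus: "bilinear bf \<Longrightarrow> qform bf (- x) = qform bf x"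
  by (simp add: qform_def bilinear_lneg bilinear_rneg)

lemma qform_scaleR: "bilinear bf \<Longrightarrow> qform bf (t *\<^sub>R x) = t\<^sup>2 * qform bf x"
  by (simp add: qform_def bilinear_lmul bilinear_rmul power2_eq_square)

lemma qform_zero: "bilinear bf \<Longrightarrow> qform bf 0 = 0"
  using qform_scaleR[of bf 0 0] by simp

lemma qform_minus_commute: "bilinear bf \<Longrightarrow> qform bf (a - b) = qform bf (b - a)"
  using qform_uminus[of bf "b - a"] by simp

lemma affine_add_diff:
  assumes "affine S" "x \<in> S" "y \<in> S" "z \<in> S"
  shows "x + y - z \<in> S"
proof -
  have combination: "u *\<^sub>R v + w *\<^sub>R t \<in> S" if "v \<in> S" "t \<in> S" "u + w = 1" for u w v t
    using assms(1) that unfolding affine_def by blast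
  have "(1/2) *\<^sub>R x + (1/2) *\<^sub>R y \<in> S"
    using combination assms(2,3) by simp
  then have "2 *\<^sub>R ((1/2) *\<^sub>R x + (1/2) *\<^sub>R y) + (-1) *\<^sub>R z \<in> S"
    using combination[OF _ assms(4), of _ 2 "-1"] by simp
  then show ?thesis
    by (simp add: scaleR_add_right)
qed

lemma q_positive_Union_chain:
  assumes "C \<noteq> {}" "\<And>X. X \<in> C \<Longrightarrow> q_positive bf X"
    and "\<And>X Y. X \<in> C \<Longrightarrow> Y \<in> C \<Longrightarrow> X \<subseteq> Y \<or> Y \<subseteq> X"
  shows "q_positive bf (\<Union>C)"
  unfolding q_positive_def
proof (intro conjI ballI)
  show "\<Union>C \<noteq> {}"
    using assms(1,2) unfolding q_positive_def by blast
next
  fix b c assume "b \<in> \<Union>C" "c \<in> \<Union>C"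
  then obtain Z where "Z \<in> C" "b \<in> Z" "c \<in> Z"
    using assms(3) by blast
  then show "qform bf (b - c) \<ge> 0"
    using assms(2) unfolding q_positive_def by blast
qed

lemma max_q_positive_superset_exists:
  assumes "q_positive bf S"
  obtains M where "max_q_positive bf M" "S \<subseteq> M"
proof -
  let ?A = "{A. q_positive bf A \<and> S \<subseteq> A}"
  have "\<exists>M\<in>?A. \<forall>X\<in>?A. M \<subseteq> X \<longrightarrow> X = M"
  proof (rule subset_Zorn_nonempty)
    show "?A \<noteq> {}"
      using assms by blast
  next
    fix C assume "C \<noteq> {}" "subset.chain ?A C"
    then show "\<Union>C \<in> ?A"
      using q_positive_Union_chain[of C bf] by (auto simp: subset_chain_def)
  qed
  then obtain M where "q_positive bf M" "S \<subseteq> M" "\<forall>X\<in>?A. M \<subseteq> X \<longrightarrow> X = M"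
    by blast
  then have "max_q_positive bf M"
    unfolding max_q_positive_def by blast
  with \<open>S \<subseteq> M\<close> show ?thesis
    using that by blast
qed

lemma q_positive_subset_pi_set:
  assumes "q_positive bf M" "P \<subseteq> M"
  shows "M \<subseteq> pi_set bf P"
  using assms unfolding q_positive_def pi_set_def by blast

lemma q_positive_insert_pi_set:
  assumes "bilinear bf" "q_positive bf P" "b \<in> pi_set bf P"
  shows "q_positive bf (insert b P)"
  using assms qform_zero[OF assms(1)] qform_minus_commute[OF assms(1), of b]
  unfolding q_positive_def pi_set_def by auto

lemma max_q_positive_pi_set:
  assumes "q_positive bf P" "q_positive bf (pi_set bf P)"
  shows "max_q_positive bf (pi_set bf P)"
  using assms q_positive_subset_pi_set[OF assms(1)] q_positive_subset_pi_set[of bf _ P]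
  unfolding max_q_positive_def by blast

lemma premax_q_positive_iff_q_positive_pi_set:
  assumes bl: "bilinear bf" and P: "q_positive bf P"
  shows "premax_q_positive bf P \<longleftrightarrow> q_positive bf (pi_set bf P)"
proof
  assume "premax_q_positive bf P"
  then obtain M where M: "max_q_positive bf M" "P \<subseteq> M"
    and unique: "\<And>M'. max_q_positive bf M' \<Longrightarrow> P \<subseteq> M' \<Longrightarrow> M' = M"
    unfolding premax_q_positive_def by blast
  have "pi_set bf P \<subseteq> M"
  proof
    fix b assume "b \<in> pi_set bf P"
    then obtain M' where "max_q_positive bf M'" "insert b P \<subseteq> M'"
      using max_q_positive_superset_exists q_positive_insert_pi_set[OF bl P] by metis
    with unique show "b \<in> M"
      by blast
  qed
  moreover have "M = pi_set bf P"
    using M q_positive_subset_pi_set calculation unfolding max_q_positive_def by blast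
  ultimately show "q_positive bf (pi_set bf P)"
    using M(1) unfolding max_q_positive_def by simp
next
  assume pi: "q_positive bf (pi_set bf P)"
  show "premax_q_positive bf P"
    unfolding premax_q_positive_def
  proof (rule ex1I[of _ "pi_set bf P"])
    show "max_q_positive bf (pi_set bf P) \<and> P \<subseteq> pi_set bf P"
      using max_q_positive_pi_set[OF P pi] q_positive_subset_pi_set[OF P] by blast
  next
    fix M assume "max_q_positive bf M \<and> P \<subseteq> M"
    then show "M = pi_set bf P"
      using pi q_positive_subset_pi_set[of bf M P] unfolding max_q_positive_def by blast
  qed
qed

lemma pi_set_translate:
  assumes "affine P" "b \<in> pi_set bf P" "x \<in> P" "y \<in> P"
  shows "b + x - y \<in> pi_set bf P"
  unfolding pi_set_def
proof (intro CollectI ballI)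
  fix a assume "a \<in> P"
  then have "a + y - x \<in> P"
    using affine_add_diff assms by blast
  then have "qform bf (b - (a + y - x)) \<ge> 0"
    using assms(2) unfolding pi_set_def by blast
  then show "qform bf (b + x - y - a) \<ge> 0"
    by (simp add: algebra_simps)
qed

lemma pi_set_reflect:
  assumes "bilinear bf" "affine P" "b \<in> pi_set bf P" "x \<in> P"
  shows "2 *\<^sub>R x - b \<in> pi_set bf P"
  unfolding pi_set_def
proof (intro CollectI ballI)
  fix a assume "a \<in> P"
  then have "x + x - a \<in> P"
    using affine_add_diff assms by blast
  then have "qform bf (b - (x + x - a)) \<ge> 0"
    using assms(3) unfolding pi_set_def by blast
  moreover have "b - (x + x - a) = - (2 *\<^sub>R x - b - a)"
    by (simp add: algebra_simps scaleR_2)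
  ultimately show "qform bf (2 *\<^sub>R x - b - a) \<ge> 0"
    using qform_uminus[OF assms(1)] by metis
qed

lemma pi_set_homothety:
  assumes "bilinear bf" "affine P" "q_positive bf P" "b \<in> pi_set bf P" "x \<in> P"
  shows "x + t *\<^sub>R (b - x) \<in> pi_set bf P"
proof (cases "t = 0")
  case True
  then show ?thesis
    using q_positive_subset_pi_set[OF assms(3)] assms(5) by auto
next
  case False
  show ?thesis
    unfolding pi_set_def
  proof (intro CollectI ballI)
    fix a assume "a \<in> P"
    have "x + (1/t) *\<^sub>R (a - x) = (1 - 1/t) *\<^sub>R x + (1/t) *\<^sub>R a"
      by (simp add: algebra_simps)
    also have "\<dots> \<in> P"
      using assms(2,5) \<open>a \<in> P\<close> unfolding affine_def by simp
    finally have "qform bf (b - (x + (1/t) *\<^sub>R (a - x))) \<ge> 0"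
      using assms(4) unfolding pi_set_def by blast
    moreover have "x + t *\<^sub>R (b - x) - a = t *\<^sub>R (b - (x + (1/t) *\<^sub>R (a - x)))"
      using False by (simp add: algebra_simps)
    ultimately show "qform bf (x + t *\<^sub>R (b - x) - a) \<ge> 0"
      by (simp add: qform_scaleR[OF assms(1)])
  qed
qed

lemma affine_pi_set_if_q_positive:
  assumes bl: "bilinear bf" and "affine P" "q_positive bf P" and pi: "q_positive bf (pi_set bf P)"
  shows "affine (pi_set bf P)"
proof -
  obtain p where p: "p \<in> P"
    using assms(3) unfolding q_positive_def by blast
  have add_diff: "b + c - p \<in> pi_set bf P" if "b \<in> pi_set bf P" "c \<in> pi_set bf P" for b c
    unfolding pi_set_def
  proof (intro CollectI ballI)
    fix a assume "a \<in> P"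
    have "2 *\<^sub>R p - c + a - p \<in> pi_set bf P"
      using pi_set_translate[OF assms(2) pi_set_reflect[OF bl assms(2) that(2) p] \<open>a \<in> P\<close> p] .
    then have "qform bf (b - (2 *\<^sub>R p - c + a - p)) \<ge> 0"
      using pi that unfolding q_positive_def by blast
    then show "qform bf (b + c - p - a) \<ge> 0"
      by (simp add: algebra_simps scaleR_2)
  qed
  show ?thesis
    unfolding affine_def
  proof (intro ballI allI impI)
    fix b c and u v :: real
    assume bc: "b \<in> pi_set bf P" "c \<in> pi_set bf P" and "u + v = 1"
    have "(p + u *\<^sub>R (b - p)) + (p + v *\<^sub>R (c - p)) - p \<in> pi_set bf P"
      using add_diff pi_set_homothety[OF bl assms(2,3) _ p] bc by blast
    moreover have "(p + u *\<^sub>R (b - p)) + (p + v *\<^sub>R (c - p)) - p = u *\<^sub>R b + v *\<^sub>R c"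
      using \<open>u + v = 1\<close> by (simp add: algebra_simps flip: scaleR_add_left)
    ultimately show "u *\<^sub>R b + v *\<^sub>R c \<in> pi_set bf P"
      by simp
  qed
qed

lemma q_positive_pi_set_if_affine:
  assumes "q_positive bf P" "affine (pi_set bf P)"
  shows "q_positive bf (pi_set bf P)"
proof -
  obtain p where p: "p \<in> P"
    using assms(1) unfolding q_positive_def by blast
  have "qform bf (b - c) \<ge> 0" if "b \<in> pi_set bf P" "c \<in> pi_set bf P" for b c
  proof -
    have "b + p - c \<in> pi_set bf P"
      using affine_add_diff[OF assms(2) that(1) _ that(2)] q_positive_subset_pi_set[OF assms(1)] p
      by blast
    then have "qform bf (b + p - c - p) \<ge> 0"
      using p unfolding pi_set_def by blast
    then show ?thesis
      by simp
  qed
  then show ?thesis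
    using p q_positive_subset_pi_set[OF assms(1)] unfolding q_positive_def by blast
qed

theorem mainTheorem6:
  fixes bf :: "'a::real_vector \<Rightarrow> 'a \<Rightarrow> real" and P :: "'a set"
  assumes "ssd_space bf"
    and "affine P"
    and "q_positive bf P"
  shows "premax_q_positive bf P \<longleftrightarrow> affine (pi_set bf P)"
proof -
  have bl: "bilinear bf"
    using assms(1) unfolding ssd_space_def by blast
  have "q_positive bf (pi_set bf P) \<longleftrightarrow> affine (pi_set bf P)"
    using affine_pi_set_if_q_positive[OF bl assms(2,3)] q_positive_pi_set_if_affine[OF assms(3)]
    by blast
  then show ?thesis
    using premax_q_positive_iff_q_positive_pi_set[OF bl assms(3)] by simp
qed

end
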